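(* Let $A,G$ be $n\times n$ symmetric positive definite matrices with $G\succeq A$, let $u\in\mathbb{R}^n\setminus\{0\}$, and let $G_+=\mathrm{SR1}(A,G,u)$. Then $$\nu^2(A,G,u)\ge\frac{u^\top(G-A)G_+^{-1}(G-A)u}{u^\top Gu}.$$
   Context: $\nu(A,G,u)=\left(\frac{u^\top(G-A)G^{-1}(G-A)u}{u^\top(A-AG^{-1}A)u}\right)^{1/2}$ for $G\succeq A$, with the convention (used in the paper) that $\nu(A,G,u)=0$ when $(G-A)u=0$. $\mathrm{SR1}(A,G,u)=G$ if $(G-A)u=0$, and otherwise $\mathrm{SR1}(A,G,u)=G-\frac{(G-A)uu^\top(G-A)}{u^\top(G-A)u}$. *)

theory Defs
  imports "HOL-Analysis.Analysis"
begin

definition sym_mat :: "real^'n^'n \<Rightarrow> bool" where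
  "sym_mat M \<longleftrightarrow> transpose M = M"

definition pos_def :: "real^'n^'n \<Rightarrow> bool" where
  "pos_def M \<longleftrightarrow> sym_mat M \<and> (\<forall>x. x \<noteq> 0 \<longrightarrow> x \<bullet> (M *v x) > 0)"

definition loewner_ge :: "real^'n^'n \<Rightarrow> real^'n^'n \<Rightarrow> bool" where
  "loewner_ge G A \<longleftrightarrow> (\<forall>x. x \<bullet> ((G - A) *v x) \<ge> 0)"

definition nu :: "real^'n^'n \<Rightarrow> real^'n^'n \<Rightarrow> real^'n \<Rightarrow> real" where
  "nu A G u = (if (G - A) *v u = 0 then 0 else
     sqrt ((u \<bullet> (((G - A) ** matrix_inv G ** (G - A)) *v u)) /
           (u \<bullet> ((A - A ** matrix_inv G ** A) *v u))))"

definition SR1 :: "real^'n^'n \<Rightarrow> real^'n^'n \<Rightarrow> real^'n \<Rightarrow> real^'n^'n" where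
  "SR1 A G u = (if (G - A) *v u = 0 then G else
     G - (1 / (u \<bullet> ((G - A) *v u))) *\<^sub>R
           (\<chi> i j. ((G - A) *v u) $ i * ((G - A) *v u) $ j))"

end

theory Submission
  imports Defs
begin

text \<open>
  Put M = G - A, r = M u, s = u' M u and a = r' G^-1 r. Since A - A G^-1 A = M - M G^-1 M,
  one gets nu^2 = a / (s - a). Cauchy-Schwarz for the semi-inner product given by M shows
  that G+ = G - r r' / s still dominates A, so it is positive definite, and the
  Sherman-Morrison formula gives r' G+^-1 r = a s / (s - a). The right-hand side thus equals
  a s / ((s - a) u' G u), which is at most nu^2 because u' G u = u' A u + s \<ge> s.
\<close>

lemma matrix_inv_cancel:
  fixes M :: "'a::comm_semiring_1^'n^'m"
  assumes "invertible M"
  shows "M *v (matrix_inv M *v y) = y" "matrix_inv M *v (M *v x) = x"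
proof -
  have "\<exists>M'. M ** M' = mat 1 \<and> M' ** M = mat 1"
    using assms unfolding invertible_def by blast
  from someI_ex[OF this] show "M *v (matrix_inv M *v y) = y" "matrix_inv M *v (M *v x) = x"
    unfolding matrix_inv_def by (simp_all add: matrix_vector_mul_assoc)
qed

lemma matrix_inv_complement_eq:
  fixes A G :: "real^'n^'n"
  assumes "invertible G"
  shows "A - A ** matrix_inv G ** A = (G - A) - (G - A) ** matrix_inv G ** (G - A)"
  unfolding matrix_eq
  by (simp add: matrix_vector_mul_assoc[symmetric] matrix_vector_mult_diff_rdistrib
      matrix_vector_mult_diff_distrib matrix_inv_cancel[OF assms])

lemma sym_mat_inner_commute:
  fixes M :: "real^'n^'n"
  assumes "sym_mat M"
  shows "x \<bullet> (M *v y) = y \<bullet> (M *v x)"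
proof -
  have "x \<bullet> (M *v y) = (x v* M) \<bullet> y"
    by (simp add: dot_lmul_matrix)
  also have "x v* M = M *v x"
    by (metis assms sym_mat_def vector_transpose_matrix)
  finally show ?thesis
    by (simp add: inner_commute)
qed

lemma sym_mat_diff:
  assumes "sym_mat A" and "sym_mat G"
  shows "sym_mat (G - A)"
  using assms by (simp add: sym_mat_def transpose_def vec_eq_iff)

lemma sym_mat_inner_sandwich:
  fixes M X :: "real^'n^'n"
  assumes "sym_mat M"
  shows "u \<bullet> ((M ** X ** M) *v u) = (M *v u) \<bullet> (X *v (M *v u))"
  using sym_mat_inner_commute[OF assms, of u "X *v (M *v u)"]
  by (simp add: matrix_vector_mul_assoc matrix_mul_assoc inner_commute)

lemma psd_cauchy_schwarz:
  fixes M :: "real^'n^'n"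
  assumes "sym_mat M" and psd: "\<And>z. 0 \<le> z \<bullet> (M *v z)"
  shows "(x \<bullet> (M *v y))\<^sup>2 \<le> (x \<bullet> (M *v x)) * (y \<bullet> (M *v y))"
proof -
  define p c d where "p = x \<bullet> (M *v y)" and "c = y \<bullet> (M *v y)" and "d = x \<bullet> (M *v x)"
  have form: "(x - t *\<^sub>R y) \<bullet> (M *v (x - t *\<^sub>R y)) = d - 2 * t * p + t\<^sup>2 * c" for t
    using sym_mat_inner_commute[OF assms(1), of y x]
    by (simp add: p_def c_def d_def matrix_vector_mult_diff_distrib matrix_vector_mult_scaleR
        inner_diff_left inner_diff_right algebra_simps power2_eq_square)
  show ?thesis
  proof (cases "c = 0")
    case True
    have "0 \<le> d - 2 * t * p" for t
      using psd[of "x - t *\<^sub>R y"] form[of t] True by simp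
    from this[of "(d + 1) / (2 * p)"] have "p = 0"
      by (cases "p = 0") (simp_all add: field_simps)
    then show ?thesis
      using psd[of x] psd[of y] by (simp add: p_def)
  next
    case False
    then have "0 < c"
      using psd[of y] by (simp add: c_def)
    have "0 \<le> d - 2 * (p / c) * p + (p / c)\<^sup>2 * c"
      using psd[of "x - (p / c) *\<^sub>R y"] form[of "p / c"] by simp
    then show ?thesis
      using \<open>0 < c\<close> by (simp add: p_def [symmetric] c_def [symmetric] d_def [symmetric]
          field_simps power2_eq_square)
  qed
qed

lemma psd_form_pos_if_mult_nonzero:
  fixes M :: "real^'n^'n"
  assumes "sym_mat M" and psd: "\<And>z. 0 \<le> z \<bullet> (M *v z)" and "M *v u \<noteq> 0"
  shows "0 < u \<bullet> (M *v u)"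
proof -
  have "0 < ((M *v u) \<bullet> (M *v u))\<^sup>2"
    using assms(3) by simp
  also have "\<dots> \<le> ((M *v u) \<bullet> (M *v (M *v u))) * (u \<bullet> (M *v u))"
    by (rule psd_cauchy_schwarz[OF assms(1) psd])
  finally show ?thesis
    using psd[of u] psd[of "M *v u"] by (simp add: zero_less_mult_iff)
qed

lemma pos_def_invertible:
  fixes M :: "real^'n^'n"
  assumes "pos_def M"
  shows "invertible M"
proof -
  have "x = 0" if "M *v x = 0" for x
    using assms that by (fastforce simp: pos_def_def)
  then show ?thesis
    using matrix_left_invertible_ker invertible_left_inverse by metis
qed

lemma pos_def_inverse_form_pos:
  fixes M :: "real^'n^'n"
  assumes "pos_def M" and "r \<noteq> 0"
  shows "0 < r \<bullet> (matrix_inv M *v r)"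
proof -
  define y where "y = matrix_inv M *v r"
  have My: "M *v y = r"
    by (simp add: y_def matrix_inv_cancel pos_def_invertible[OF assms(1)])
  then have "y \<noteq> 0"
    using assms(2) by auto
  then have "0 < y \<bullet> (M *v y)"
    using assms(1) by (simp add: pos_def_def)
  then show ?thesis
    by (metis My inner_commute y_def)
qed

lemma pos_def_if_loewner_ge:
  fixes A G :: "real^'n^'n"
  assumes "pos_def A" and "sym_mat G" and "loewner_ge G A"
  shows "pos_def G"
proof -
  have "x \<bullet> (G *v x) = x \<bullet> (A *v x) + x \<bullet> ((G - A) *v x)" for x
    by (simp add: matrix_vector_mult_diff_rdistrib inner_diff_right)
  then show ?thesis
    using assms by (fastforce simp: pos_def_def loewner_ge_def intro: add_pos_nonneg)
qed

lemma SR1_mult_vector: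
  fixes A G :: "real^'n^'n"
  assumes "r = (G - A) *v u" and "r \<noteq> 0"
  shows "SR1 A G u *v x = G *v x - ((r \<bullet> x) / (u \<bullet> r)) *\<^sub>R r"
proof -
  have "(\<chi> i j. r $ i * r $ j) *v x = (r \<bullet> x) *\<^sub>R r"
    by (simp add: vec_eq_iff matrix_vector_mult_def inner_vec_def sum_distrib_left
        mult.commute mult.left_commute)
  moreover have "(c *\<^sub>R X) *v x = c *\<^sub>R (X *v x)" for c and X :: "real^'n^'n"
    by (simp add: vec_eq_iff matrix_vector_mult_def sum_distrib_left mult.assoc)
  ultimately show ?thesis
    using assms by (simp add: SR1_def matrix_vector_mult_diff_rdistrib)
qed

lemma sym_mat_SR1:
  assumes "sym_mat G"
  shows "sym_mat (SR1 A G u)"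
  using assms by (simp add: SR1_def sym_mat_def transpose_def vec_eq_iff mult.commute)

lemma loewner_ge_SR1:
  fixes A G :: "real^'n^'n"
  assumes "sym_mat A" and "sym_mat G" and "loewner_ge G A"
  shows "loewner_ge (SR1 A G u) A"
proof (cases "(G - A) *v u = 0")
  case True
  then show ?thesis
    using assms(3) by (simp add: SR1_def)
next
  case False
  define M r where "M = G - A" and "r = M *v u"
  have symM: "sym_mat M"
    unfolding M_def using assms(1,2) by (rule sym_mat_diff)
  have psd: "0 \<le> z \<bullet> (M *v z)" for z
    using assms(3) by (simp add: M_def loewner_ge_def)
  have "(r \<bullet> x)\<^sup>2 / (u \<bullet> r) \<le> x \<bullet> (M *v x)" for x
  proof -
    have "(r \<bullet> x)\<^sup>2 \<le> (x \<bullet> (M *v x)) * (u \<bullet> r)"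
      using psd_cauchy_schwarz[OF symM psd, of x u] by (simp add: r_def inner_commute)
    then show ?thesis
      using psd[of x] psd[of u] by (simp add: r_def divide_le_eq mult.commute)
  qed
  moreover have "x \<bullet> ((SR1 A G u - A) *v x) = x \<bullet> (M *v x) - (r \<bullet> x)\<^sup>2 / (u \<bullet> r)" for x
    using False
    by (simp add: SR1_mult_vector[of r] M_def r_def matrix_vector_mult_diff_rdistrib
        inner_diff_right power2_eq_square inner_commute)
  ultimately show ?thesis
    by (simp add: loewner_ge_def)
qed

lemma pos_def_SR1:
  fixes A G :: "real^'n^'n"
  assumes "pos_def A" and "sym_mat G" and "loewner_ge G A"
  shows "pos_def (SR1 A G u)"
  using assms pos_def_if_loewner_ge sym_mat_SR1 loewner_ge_SR1 by (metis pos_def_def)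

lemma sherman_morrison_inverse_form:
  fixes G H :: "real^'n^'n"
  assumes "invertible G" and "invertible H" and "s \<noteq> 0"
    and H: "\<And>x. H *v x = G *v x - ((r \<bullet> x) / s) *\<^sub>R r"
  defines "a \<equiv> r \<bullet> (matrix_inv G *v r)" and "b \<equiv> r \<bullet> (matrix_inv H *v r)"
  shows "b * (s - a) = a * s"
proof -
  define y k where "y = matrix_inv H *v r" and "k = 1 + b / s"
  have "G *v y = k *\<^sub>R r"
    using H[of y] by (simp add: y_def k_def b_def matrix_inv_cancel[OF assms(2)] algebra_simps)
  then have "y = k *\<^sub>R (matrix_inv G *v r)"
    by (metis matrix_inv_cancel(2)[OF assms(1)] matrix_vector_mult_scaleR)
  then have "b = k * a"
    by (simp add: a_def b_def flip: y_def)
  then show ?thesis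
    using assms(3) by (simp add: k_def field_simps)
qed

lemma SR1_inverse_form:
  fixes A G :: "real^'n^'n" and u :: "real^'n"
  assumes "pos_def A" and "pos_def G" and "loewner_ge G A"
    and r_def: "r = (G - A) *v u" and s_def: "s = u \<bullet> r"
    and a_def: "a = r \<bullet> (matrix_inv G *v r)" and "r \<noteq> 0"
  shows "0 < a" and "a < s" and "r \<bullet> (matrix_inv (SR1 A G u) *v r) = a * s / (s - a)"
proof -
  define b where "b = r \<bullet> (matrix_inv (SR1 A G u) *v r)"
  have symG: "sym_mat G" and symM: "sym_mat (G - A)"
    using assms(1,2) sym_mat_diff by (auto simp: pos_def_def)
  have pdSR1: "pos_def (SR1 A G u)"
    using assms(1) symG assms(3) by (rule pos_def_SR1)
  have "0 < s"
    using psd_form_pos_if_mult_nonzero[OF symM _ assms(7)[unfolded r_def]] assms(3)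
    by (simp add: s_def r_def loewner_ge_def)
  show "0 < a"
    using pos_def_inverse_form_pos[OF assms(2) assms(7)] by (simp add: a_def)
  have "0 < b"
    using pos_def_inverse_form_pos[OF pdSR1 assms(7)] by (simp add: b_def)
  have SM: "b * (s - a) = a * s"
    using sherman_morrison_inverse_form[OF pos_def_invertible[OF assms(2)]
        pos_def_invertible[OF pdSR1], of s r] SR1_mult_vector[OF r_def assms(7)] \<open>0 < s\<close>
    by (simp add: a_def b_def s_def)
  then have "0 < b * (s - a)"
    using \<open>0 < a\<close> \<open>0 < s\<close> by simp
  then show "a < s"
    using \<open>0 < b\<close> by (simp add: zero_less_mult_iff)
  with SM show "r \<bullet> (matrix_inv (SR1 A G u) *v r) = a * s / (s - a)"
    by (simp add: b_def eq_divide_eq)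
qed

lemma nu_squared_eq:
  fixes A G :: "real^'n^'n" and u :: "real^'n"
  assumes "invertible G" and "sym_mat (G - A)"
    and r_def: "r = (G - A) *v u" and s_def: "s = u \<bullet> r"
    and a_def: "a = r \<bullet> (matrix_inv G *v r)" and "r \<noteq> 0" and "0 \<le> a" and "a < s"
  shows "(nu A G u)\<^sup>2 = a / (s - a)"
proof -
  have num: "u \<bullet> (((G - A) ** matrix_inv G ** (G - A)) *v u) = a"
    by (simp add: sym_mat_inner_sandwich[OF assms(2)] a_def r_def)
  have den: "u \<bullet> ((A - A ** matrix_inv G ** A) *v u) = s - a"
    \<comment> \<open>\<open>A\<close> must be instantiated: the identity is an instance of itself with \<open>A := G - A\<close>,
      so rewriting with it would loop\<close>
    unfolding matrix_inv_complement_eq[OF assms(1), of A]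
      matrix_vector_mult_diff_rdistrib[of "G - A" "(G - A) ** matrix_inv G ** (G - A)"]
      inner_diff_right num s_def r_def ..
  show ?thesis
    unfolding nu_def num den using assms(6-8) by (simp add: r_def)
qed

theorem lemma5:
  fixes A G :: "real^'n^'n" and u :: "real^'n"
  assumes "pos_def A" and "pos_def G" and "loewner_ge G A" and "u \<noteq> 0"
  shows "(nu A G u)\<^sup>2 \<ge>
    (u \<bullet> (((G - A) ** matrix_inv (SR1 A G u) ** (G - A)) *v u)) / (u \<bullet> (G *v u))"
proof (cases "(G - A) *v u = 0")
  case True
  then show ?thesis
    by (simp add: nu_def SR1_def matrix_vector_mul_assoc[symmetric])
next
  case False
  define r s a where "r = (G - A) *v u" and "s = u \<bullet> r" and "a = r \<bullet> (matrix_inv G *v r)"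
  have symM: "sym_mat (G - A)"
    using assms(1,2) sym_mat_diff by (auto simp: pos_def_def)
  have "0 < a" "a < s" and b: "r \<bullet> (matrix_inv (SR1 A G u) *v r) = a * s / (s - a)"
    using SR1_inverse_form[OF assms(1-3) r_def s_def a_def] False by (simp_all add: r_def)
  have "u \<bullet> (G *v u) = u \<bullet> (A *v u) + s"
    by (simp add: s_def r_def matrix_vector_mult_diff_rdistrib inner_diff_right)
  moreover have "0 < u \<bullet> (A *v u)"
    using assms(1,4) by (simp add: pos_def_def)
  ultimately have "s \<le> u \<bullet> (G *v u)"
    by linarith
  have "u \<bullet> (((G - A) ** matrix_inv (SR1 A G u) ** (G - A)) *v u) / (u \<bullet> (G *v u))
      \<le> a * s / (s - a) / s"
    unfolding sym_mat_inner_sandwich[OF symM] r_def[symmetric] b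
    using \<open>s \<le> u \<bullet> (G *v u)\<close> \<open>0 < a\<close> \<open>a < s\<close> by (intro frac_le) auto
  also have "\<dots> = (nu A G u)\<^sup>2"
    using nu_squared_eq[OF pos_def_invertible[OF assms(2)] symM r_def s_def a_def] False
      \<open>0 < a\<close> \<open>a < s\<close>
    by (simp add: r_def)
  finally show ?thesis .
qed

end
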